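(* Let $\mathbb{K}=\mathbb{R}$ or $\mathbb{C}$, $1\le m\le r$, $\theta_1\ge\cdots\ge\theta_m>0>\theta_{m+1}\ge\cdots\ge\theta_r$. Let $G=(g_1,\ldots,g_r)$ be a random vector in $\mathbb{K}^r$, $(G(k))_{k\ge1}$ i.i.d. copies, $G_i^n=(g_i(1),\ldots,g_i(n))^T$, and $X_n$ deterministic real diagonal with eigenvalues $\lambda_1^n\ge\cdots\ge\lambda_n^n$. Let $\widetilde{X_n}$ be given by either the i.i.d. perturbation model $X_n+\frac1n\sum_i\theta_iG_i^n(G_i^n)^*$ or the orthonormalized perturbation model $X_n+\sum_i\theta_iU_i^n(U_i^n)^*$ ($(U_i^n)$ Gram–Schmidt orthonormalization of $(G_i^n)$), with eigenvalues $\widetilde\lambda_1^n\ge\cdots\ge\widetilde\lambda_n^n$. Assume (A) $\frac1n\sum_i\delta_{\lambda_i^n}$ converges weakly to a compactly supported probability measure $\mu$ with support bounds $a\le b$; (B) $\mathbb{E}e^{\alpha\sum_i|g_i|^2}<\infty$ for some $\alpha>0$ and, in the orthonormalized model, $\mathbb{P}(\sum_i\lambda_ig_i=0)=0$ for all $\lambda\in\mathbb{K}^r\setminus\{0\}$; (C) $\lambda_1^n\to b$ and $\lambda_n^n\to a$. Then the law of $(\widetilde\lambda_1^n,\ldots,\widetilde\lambda_m^n)$ is exponentially tight in the scale $n$.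
   Context: Exponential tightness in the scale $n$: for every $M>0$ there is a compact $\mathcal C\subset\mathbb{R}^m$ with $\limsup_n\frac1n\log\mathbb{P}((\widetilde\lambda_1^n,\ldots,\widetilde\lambda_m^n)\notin\mathcal C)\le-M$. *)

theory Defs
  imports "HOL-Probability.Probability" "Jordan_Normal_Form.Char_Poly" "Jordan_Normal_Form.Gram_Schmidt"
begin

(* The scalar field K is R or C, modelled as a subset of C. *)
definition Kset :: "bool \<Rightarrow> complex set" where
  "Kset real_case = (if real_case then \<real> else UNIV)"

definition measure_support :: "real measure \<Rightarrow> real set" where
  "measure_support \<mu> = {x. \<forall>e>0. measure \<mu> (ball x e) > 0}"

definition empirical_measure :: "nat \<Rightarrow> (nat \<Rightarrow> real) \<Rightarrow> real measure" where
  "empirical_measure n d = measure_pmf (map_pmf d (pmf_of_set {..<n}))"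

(* eigenvalues (with multiplicity) of a complex square matrix, i.e. the roots of its characteristic
   polynomial; for a Hermitian matrix these are real, and we list their real parts in
   nonincreasing order: eig_desc A ! (j-1) is the j-th largest eigenvalue *)
definition eig_list :: "complex mat \<Rightarrow> complex list" where
  "eig_list A = (SOME as. char_poly A = (\<Prod>a\<leftarrow>as. [:- a, 1:]) \<and> length as = dim_row A)"

definition eig_desc :: "complex mat \<Rightarrow> real list" where
  "eig_desc A = rev (sort (map Re (eig_list A)))"

(* the column vector G_i^n = (g_i(1),...,g_i(n))^T ; here g i k is g_i(k+1) *)
definition Gvec :: "nat \<Rightarrow> (nat \<Rightarrow> nat \<Rightarrow> 'w \<Rightarrow> complex) \<Rightarrow> nat \<Rightarrow> 'w \<Rightarrow> complex vec" where
  "Gvec n g i \<omega> = vec n (\<lambda>k. g i k \<omega>)"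

definition vnorm :: "complex vec \<Rightarrow> real" where
  "vnorm u = sqrt (\<Sum>j<dim_vec u. (cmod (u $ j))\<^sup>2)"

definition normalize_vec :: "complex vec \<Rightarrow> complex vec" where
  "normalize_vec u = complex_of_real (1 / vnorm u) \<cdot>\<^sub>v u"

definition Uvec :: "nat \<Rightarrow> nat \<Rightarrow> (nat \<Rightarrow> nat \<Rightarrow> 'w \<Rightarrow> complex) \<Rightarrow> nat \<Rightarrow> 'w \<Rightarrow> complex vec" where
  "Uvec r n g i \<omega> = normalize_vec (gram_schmidt n (map (\<lambda>i'. Gvec n g i' \<omega>) [0..<r]) ! i)"

definition perturbed :: "nat \<Rightarrow> (nat \<Rightarrow> real) \<Rightarrow> nat \<Rightarrow> (nat \<Rightarrow> real) \<Rightarrow> real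
    \<Rightarrow> (nat \<Rightarrow> complex vec) \<Rightarrow> complex mat" where
  "perturbed n dn r \<theta> c v = mat n n (\<lambda>(j,l). (if j = l then complex_of_real (dn j) else 0)
      + (\<Sum>i<r. complex_of_real (c * \<theta> i) * (v i $ j) * cnj (v i $ l)))"

definition Xtilde :: "bool \<Rightarrow> nat \<Rightarrow> (nat \<Rightarrow> nat \<Rightarrow> real) \<Rightarrow> nat \<Rightarrow> (nat \<Rightarrow> real)
    \<Rightarrow> (nat \<Rightarrow> nat \<Rightarrow> 'w \<Rightarrow> complex) \<Rightarrow> 'w \<Rightarrow> complex mat" where
  "Xtilde orth n d r \<theta> g \<omega> =
     (if orth then perturbed n (d n) r \<theta> 1 (\<lambda>i. Uvec r n g i \<omega>)
      else perturbed n (d n) r \<theta> (1 / real n) (\<lambda>i. Gvec n g i \<omega>))"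

definition ln_ereal :: "real \<Rightarrow> ereal" where
  "ln_ereal p = (if p \<le> 0 then -\<infinity> else ereal (ln p))"

end

theory Submission
  imports Defs
begin

text \<open>
  If \<open>x\<close> is an eigenvector of
  \<open>X + c \<Sum>\<^sub>i \<theta>\<^sub>i v\<^sub>i v\<^sub>i\<^sup>*\<close> for the eigenvalue \<open>\<lambda>\<close>, then
  \<open>\<lambda> |x|\<^sup>2 = \<Sum>\<^sub>j d\<^sub>j |x\<^sub>j|\<^sup>2 + c \<Sum>\<^sub>i \<theta>\<^sub>i |(v\<^sub>i, x)|\<^sup>2\<close>, so by Cauchy-Schwarz
  \<open>|\<lambda>| \<le> max\<^sub>j |d\<^sub>j| + c \<Sum>\<^sub>i |\<theta>\<^sub>i| |v\<^sub>i|\<^sup>2\<close>. By (C) the first term is eventually at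
  most \<open>|a| + |b| + 1\<close>. In the orthonormalised model \<open>|U\<^sub>i| \<le> 1\<close>, so the top eigenvalues are
  bounded deterministically. In the i.i.d. model the second term is \<open>\<Sum>\<^sub>i |\<theta>\<^sub>i| S\<^sub>n / n\<close>,
  where \<open>S\<^sub>n\<close> is the sum of \<open>|g\<^sub>i(k)|\<^sup>2\<close> over \<open>i \<le> r\<close> and \<open>k \<le> n\<close>; by (B) and
  Chernoff's bound, \<open>P(S\<^sub>n > t n) \<le> (e\<^sup>-\<^sup>\<alpha>\<^sup>t E)\<^sup>n\<close> where \<open>E\<close> is the exponential
  moment of (B), and this is below \<open>e\<^sup>-\<^sup>L\<^sup>n\<close> once \<open>t\<close> is large.
\<close>

lemma eig_list_char_poly:
  assumes "A \<in> carrier_mat n n"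
  shows "char_poly A = (\<Prod>a\<leftarrow>eig_list A. [:- a, 1:])" and "length (eig_list A) = n"
proof -
  obtain as where "char_poly A = (\<Prod>a\<leftarrow>as. [:- a, 1:]) \<and> length as = dim_row A"
    using char_poly_factorized[OF assms] assms by auto
  then have "char_poly A = (\<Prod>a\<leftarrow>eig_list A. [:- a, 1:]) \<and> length (eig_list A) = dim_row A"
    unfolding eig_list_def by (rule someI)
  then show "char_poly A = (\<Prod>a\<leftarrow>eig_list A. [:- a, 1:])" and "length (eig_list A) = n"
    using assms by auto
qed

lemma eigenvalue_if_mem_eig_list:
  assumes A: "A \<in> carrier_mat n n" and l: "l \<in> set (eig_list A)"
  shows "eigenvalue A l"
proof -
  have "poly (char_poly A) l = 0"
    using l by (simp add: eig_list_char_poly(1)[OF A] poly_prod_list prod_list_zero_iff)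
  then show ?thesis
    using eigenvalue_root_char_poly[OF A] by blast
qed

lemma eig_desc_nth_eq_Re_eigenvalue:
  assumes A: "A \<in> carrier_mat n n" and j: "j < n"
  obtains l where "eigenvalue A l" and "eig_desc A ! j = Re l"
proof -
  have "j < length (eig_desc A)"
    using j by (simp add: eig_desc_def eig_list_char_poly(2)[OF A])
  then have "eig_desc A ! j \<in> set (eig_desc A)"
    by (rule nth_mem)
  then obtain l where "l \<in> set (eig_list A)" and "eig_desc A ! j = Re l"
    by (auto simp: eig_desc_def)
  then show ?thesis
    using that eigenvalue_if_mem_eig_list[OF A] by blast
qed

lemma cmod_sum_cnj_mult_square_le:
  fixes a b :: "nat \<Rightarrow> complex"
  shows "(cmod (\<Sum>l<n. cnj (a l) * b l))\<^sup>2 \<le> (\<Sum>l<n. (cmod (a l))\<^sup>2) * (\<Sum>l<n. (cmod (b l))\<^sup>2)"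
proof -
  have "cmod (\<Sum>l<n. cnj (a l) * b l) \<le> (\<Sum>l<n. cmod (a l) * cmod (b l))"
    using norm_sum[of "\<lambda>l. cnj (a l) * b l"] by (simp add: norm_mult)
  then have "(cmod (\<Sum>l<n. cnj (a l) * b l))\<^sup>2 \<le> (\<Sum>l<n. cmod (a l) * cmod (b l))\<^sup>2"
    by (rule power_mono) simp
  also have "\<dots> \<le> (\<Sum>l<n. (cmod (a l))\<^sup>2) * (\<Sum>l<n. (cmod (b l))\<^sup>2)"
    by (rule Cauchy_Schwarz_ineq_sum)
  finally show ?thesis .
qed

lemma perturbed_carrier_mat: "perturbed n dn r \<theta> c v \<in> carrier_mat n n"
  unfolding perturbed_def by simp

lemma perturbed_mult_vec_nth:
  assumes x: "x \<in> carrier_vec n" and j: "j < n"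
  shows "(perturbed n dn r \<theta> c v *\<^sub>v x) $ j = complex_of_real (dn j) * x $ j
           + (\<Sum>i<r. complex_of_real (c * \<theta> i) * v i $ j * (\<Sum>k<n. cnj (v i $ k) * x $ k))"
proof -
  have "(perturbed n dn r \<theta> c v *\<^sub>v x) $ j
      = (\<Sum>k<n. (if j = k then complex_of_real (dn j) else 0) * x $ k)
        + (\<Sum>k<n. \<Sum>i<r. complex_of_real (c * \<theta> i) * v i $ j * (cnj (v i $ k) * x $ k))"
    using x j unfolding perturbed_def
    by (auto simp: scalar_prod_def lessThan_atLeast0 distrib_right sum.distrib
        sum_distrib_right mult.assoc intro!: sum.cong)
  also have "(\<Sum>k<n. (if j = k then complex_of_real (dn j) else 0) * x $ k)
      = (\<Sum>k<n. if j = k then complex_of_real (dn j) * x $ k else 0)"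
    by (intro sum.cong) auto
  also have "\<dots> = complex_of_real (dn j) * x $ j"
    using j by simp
  also have "(\<Sum>k<n. \<Sum>i<r. complex_of_real (c * \<theta> i) * v i $ j * (cnj (v i $ k) * x $ k))
      = (\<Sum>i<r. complex_of_real (c * \<theta> i) * v i $ j * (\<Sum>k<n. cnj (v i $ k) * x $ k))"
    by (subst sum.swap) (simp add: sum_distrib_left)
  finally show ?thesis .
qed

lemma perturbed_quadratic_form:
  assumes x: "x \<in> carrier_vec n"
  shows "(\<Sum>j<n. (perturbed n dn r \<theta> c v *\<^sub>v x) $ j * cnj (x $ j))
       = (\<Sum>j<n. complex_of_real (dn j * (cmod (x $ j))\<^sup>2))
         + (\<Sum>i<r. complex_of_real (c * \<theta> i * (cmod (\<Sum>k<n. cnj (v i $ k) * x $ k))\<^sup>2))"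
proof -
  define p where "p i = (\<Sum>k<n. cnj (v i $ k) * x $ k)" for i
  have "(\<Sum>j<n. (perturbed n dn r \<theta> c v *\<^sub>v x) $ j * cnj (x $ j))
      = (\<Sum>j<n. complex_of_real (dn j) * (x $ j * cnj (x $ j)))
        + (\<Sum>j<n. \<Sum>i<r. complex_of_real (c * \<theta> i) * p i * (v i $ j * cnj (x $ j)))"
    unfolding sum.distrib[symmetric] p_def
    by (intro sum.cong refl) (simp add: perturbed_mult_vec_nth[OF x] ring_distribs
        sum_distrib_left sum_distrib_right mult_ac)
  also have "(\<Sum>j<n. \<Sum>i<r. complex_of_real (c * \<theta> i) * p i * (v i $ j * cnj (x $ j)))
      = (\<Sum>i<r. complex_of_real (c * \<theta> i) * (p i * cnj (p i)))"
    unfolding p_def by (subst sum.swap) (simp add: sum_distrib_left mult_ac)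
  finally show ?thesis
    unfolding p_def by (simp only: of_real_mult complex_norm_square)
qed

lemma sum_sq_cmod_pos:
  fixes x :: "complex vec"
  assumes "x \<in> carrier_vec n" and "x \<noteq> 0\<^sub>v n"
  shows "(\<Sum>j<n. (cmod (x $ j))\<^sup>2) > 0"
proof -
  have "(\<Sum>j<n. (cmod (x $ j))\<^sup>2) \<noteq> 0"
  proof
    assume "(\<Sum>j<n. (cmod (x $ j))\<^sup>2) = 0"
    then have "\<forall>j<n. x $ j = 0"
      by (simp add: sum_nonneg_eq_0_iff)
    then have "x = 0\<^sub>v n"
      using assms(1) by (intro eq_vecI) auto
    with assms(2) show False ..
  qed
  then show ?thesis
    by (simp add: order_le_neq_trans sum_nonneg)
qed

lemma perturbed_eigenvector_eq:
  fixes x :: "complex vec"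
  assumes x: "x \<in> carrier_vec n" and Ax: "perturbed n dn r \<theta> c v *\<^sub>v x = l \<cdot>\<^sub>v x"
  shows "complex_of_real (\<Sum>j<n. (cmod (x $ j))\<^sup>2) * l
       = (\<Sum>j<n. complex_of_real (dn j * (cmod (x $ j))\<^sup>2))
         + (\<Sum>i<r. complex_of_real (c * \<theta> i * (cmod (\<Sum>k<n. cnj (v i $ k) * x $ k))\<^sup>2))"
proof -
  have "complex_of_real (\<Sum>j<n. (cmod (x $ j))\<^sup>2) * l
      = (\<Sum>j<n. l * complex_of_real ((cmod (x $ j))\<^sup>2))"
    by (simp add: sum_distrib_left mult.commute)
  also have "\<dots> = (\<Sum>j<n. (perturbed n dn r \<theta> c v *\<^sub>v x) $ j * cnj (x $ j))"
    using x unfolding Ax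
    by (intro sum.cong refl) (simp only: carrier_vecD lessThan_iff index_smult_vec(1) complex_norm_square mult.assoc)
  also have "\<dots> = (\<Sum>j<n. complex_of_real (dn j * (cmod (x $ j))\<^sup>2))
      + (\<Sum>i<r. complex_of_real (c * \<theta> i * (cmod (\<Sum>k<n. cnj (v i $ k) * x $ k))\<^sup>2))"
    by (rule perturbed_quadratic_form[OF x])
  finally show ?thesis .
qed

lemma norm_eigenvalue_perturbed_le:
  fixes v :: "nat \<Rightarrow> complex vec"
  assumes ev: "eigenvalue (perturbed n dn r \<theta> c v) l" and D: "\<forall>j<n. \<bar>dn j\<bar> \<le> D"
  shows "cmod l \<le> D + (\<Sum>i<r. \<bar>c * \<theta> i\<bar> * (\<Sum>j<n. (cmod (v i $ j))\<^sup>2))"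
proof -
  obtain x where x: "x \<in> carrier_vec n" "x \<noteq> 0\<^sub>v n"
    and Ax: "perturbed n dn r \<theta> c v *\<^sub>v x = l \<cdot>\<^sub>v x"
    using ev unfolding eigenvalue_def eigenvector_def by (auto simp: perturbed_def)
  define N where "N = (\<Sum>j<n. (cmod (x $ j))\<^sup>2)"
  define p where "p i = (\<Sum>k<n. cnj (v i $ k) * x $ k)" for i
  have N: "N > 0"
    unfolding N_def using x by (rule sum_sq_cmod_pos)
  have "N * cmod l = cmod (complex_of_real N * l)"
    using N by (simp add: norm_mult)
  also have "\<dots> \<le> cmod (\<Sum>j<n. complex_of_real (dn j * (cmod (x $ j))\<^sup>2))
      + cmod (\<Sum>i<r. complex_of_real (c * \<theta> i * (cmod (p i))\<^sup>2))"
    unfolding N_def p_def perturbed_eigenvector_eq[OF x(1) Ax] by (rule norm_triangle_ineq)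
  also have "\<dots> \<le> (\<Sum>j<n. \<bar>dn j\<bar> * (cmod (x $ j))\<^sup>2) + (\<Sum>i<r. \<bar>c * \<theta> i\<bar> * (cmod (p i))\<^sup>2)"
    using norm_sum[of "\<lambda>j. complex_of_real (dn j * (cmod (x $ j))\<^sup>2)" "{..<n}"]
      norm_sum[of "\<lambda>i. complex_of_real (c * \<theta> i * (cmod (p i))\<^sup>2)" "{..<r}"]
    by (intro add_mono) (simp_all only: norm_of_real abs_mult abs_power2 abs_norm_cancel)
  also have "\<dots> \<le> (\<Sum>j<n. D * (cmod (x $ j))\<^sup>2)
      + (\<Sum>i<r. \<bar>c * \<theta> i\<bar> * ((\<Sum>j<n. (cmod (v i $ j))\<^sup>2) * N))"
  proof (rule add_mono; rule sum_mono)
    fix j assume "j \<in> {..<n}"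
    then show "\<bar>dn j\<bar> * (cmod (x $ j))\<^sup>2 \<le> D * (cmod (x $ j))\<^sup>2"
      using D by (intro mult_right_mono) auto
  next
    fix i
    show "\<bar>c * \<theta> i\<bar> * (cmod (p i))\<^sup>2 \<le> \<bar>c * \<theta> i\<bar> * ((\<Sum>j<n. (cmod (v i $ j))\<^sup>2) * N)"
      unfolding p_def N_def by (intro mult_left_mono cmod_sum_cnj_mult_square_le) simp
  qed
  also have "\<dots> = N * (D + (\<Sum>i<r. \<bar>c * \<theta> i\<bar> * (\<Sum>j<n. (cmod (v i $ j))\<^sup>2)))"
    unfolding N_def by (simp add: sum_distrib_left algebra_simps)
  finally show ?thesis
    using N by simp
qed

lemma abs_eig_desc_perturbed_le:
  fixes v :: "nat \<Rightarrow> complex vec"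
  assumes "\<forall>j<n. \<bar>dn j\<bar> \<le> D" and "j < n"
  shows "\<bar>eig_desc (perturbed n dn r \<theta> c v) ! j\<bar>
           \<le> D + (\<Sum>i<r. \<bar>c * \<theta> i\<bar> * (\<Sum>j<n. (cmod (v i $ j))\<^sup>2))"
proof -
  obtain l where "eigenvalue (perturbed n dn r \<theta> c v) l"
      and "eig_desc (perturbed n dn r \<theta> c v) ! j = Re l"
    using eig_desc_nth_eq_Re_eigenvalue[OF perturbed_carrier_mat \<open>j < n\<close>] .
  then show ?thesis
    using abs_Re_le_cmod[of l] norm_eigenvalue_perturbed_le[OF _ assms(1)] by fastforce
qed

lemma gram_schmidt_sub_carrier:
  "set us \<subseteq> carrier_vec n \<Longrightarrow> set ws \<subseteq> carrier_vec n
     \<Longrightarrow> set (gram_schmidt_sub n us ws) \<subseteq> carrier_vec n"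
proof (induction ws arbitrary: us)
  case (Cons w ws)
  have "dim_vec (adjuster n w us + w) = n"
    using Cons.prems(2) by (simp only: index_add_vec(2) set_simps insert_subset carrier_vecD)
  then have "set ((adjuster n w us + w) # us) \<subseteq> carrier_vec n"
    using Cons.prems(1) by (simp only: set_simps insert_subset carrier_vecI simp_thms)
  then show ?case
    using Cons.IH Cons.prems(2) by (simp only: gram_schmidt_sub.simps set_simps insert_subset)
qed (simp only: gram_schmidt_sub.simps)

lemma length_gram_schmidt_sub:
  "length (gram_schmidt_sub n us ws) = length us + length ws"
  by (induction ws arbitrary: us) (simp_all only: gram_schmidt_sub.simps list.size)

text \<open>Only an inequality: \<^const>\<open>normalize_vec\<close> maps the zero vector to itself, since \<open>1 / 0 = 0\<close>.\<close>

lemma sum_sq_normalize_vec_le_1: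
  "(\<Sum>j<dim_vec u. (cmod (normalize_vec u $ j))\<^sup>2) \<le> 1"
proof -
  define S where "S = (\<Sum>j<dim_vec u. (cmod (u $ j))\<^sup>2)"
  have "S \<ge> 0"
    unfolding S_def by (intro sum_nonneg) simp
  have "(\<Sum>j<dim_vec u. (cmod (normalize_vec u $ j))\<^sup>2) = (\<Sum>j<dim_vec u. (cmod (u $ j))\<^sup>2 / S)"
    unfolding normalize_vec_def vnorm_def S_def[symmetric]
    using \<open>S \<ge> 0\<close> by (intro sum.cong refl) (simp add: norm_mult norm_divide power_divide)
  also have "\<dots> = S / S"
    unfolding S_def by (rule sum_divide_distrib[symmetric])
  finally show ?thesis
    by simp
qed

lemma Uvec_sum_sq_le_1:
  assumes "i < r"
  shows "(\<Sum>j<n. (cmod (Uvec r n g i \<omega> $ j))\<^sup>2) \<le> 1"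
proof -
  let ?us = "gram_schmidt n (map (\<lambda>i'. Gvec n g i' \<omega>) [0..<r])"
  have "i < length ?us"
    using assms by (simp add: gram_schmidt_def length_gram_schmidt_sub)
  then have "?us ! i \<in> set ?us"
    by (rule nth_mem)
  moreover have "set ?us \<subseteq> carrier_vec n"
    unfolding gram_schmidt_def set_rev by (rule gram_schmidt_sub_carrier) (auto simp: Gvec_def)
  ultimately have "dim_vec (?us ! i) = n"
    by auto
  then show ?thesis
    using sum_sq_normalize_vec_le_1[of "?us ! i"] by (simp add: Uvec_def)
qed

lemma abs_eig_desc_Xtilde_orth_le:
  assumes "\<forall>j<n. \<bar>d n j\<bar> \<le> D" and "j < n"
  shows "\<bar>eig_desc (Xtilde True n d r \<theta> g \<omega>) ! j\<bar> \<le> D + (\<Sum>i<r. \<bar>\<theta> i\<bar>)"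
proof -
  have "\<bar>eig_desc (Xtilde True n d r \<theta> g \<omega>) ! j\<bar>
      \<le> D + (\<Sum>i<r. \<bar>\<theta> i\<bar> * (\<Sum>j<n. (cmod (Uvec r n g i \<omega> $ j))\<^sup>2))"
    using abs_eig_desc_perturbed_le[OF assms, of r \<theta> 1 "\<lambda>i. Uvec r n g i \<omega>"]
    by (simp add: Xtilde_def)
  also have "\<dots> \<le> D + (\<Sum>i<r. \<bar>\<theta> i\<bar>)"
    by (intro add_left_mono sum_mono mult_left_le Uvec_sum_sq_le_1) auto
  finally show ?thesis .
qed

lemma abs_eig_desc_Xtilde_iid_le:
  assumes "\<forall>j<n. \<bar>d n j\<bar> \<le> D" and "j < n"
  shows "\<bar>eig_desc (Xtilde False n d r \<theta> g \<omega>) ! j\<bar>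
           \<le> D + (\<Sum>i<r. \<bar>\<theta> i\<bar>) * ((\<Sum>k<n. \<Sum>i<r. (cmod (g i k \<omega>))\<^sup>2) / n)"
proof -
  have "\<bar>eig_desc (Xtilde False n d r \<theta> g \<omega>) ! j\<bar>
      \<le> D + (\<Sum>i<r. \<bar>\<theta> i\<bar> * ((\<Sum>k<n. (cmod (g i k \<omega>))\<^sup>2) / n))"
    using abs_eig_desc_perturbed_le[OF assms, of r \<theta> "1 / n" "\<lambda>i. Gvec n g i \<omega>"]
    by (simp add: Xtilde_def Gvec_def abs_mult)
  also have "\<dots> \<le> D + (\<Sum>i<r. \<bar>\<theta> i\<bar> * ((\<Sum>k<n. \<Sum>i<r. (cmod (g i k \<omega>))\<^sup>2) / n))"
    by (intro add_left_mono sum_mono mult_left_mono divide_right_mono member_le_sum) auto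
  also have "\<dots> = D + (\<Sum>i<r. \<bar>\<theta> i\<bar>) * ((\<Sum>k<n. \<Sum>i<r. (cmod (g i k \<omega>))\<^sup>2) / n)"
    by (simp only: sum_distrib_right)
  finally show ?thesis .
qed

lemma Xtilde_top_eigenvalues_in_box:
  assumes D: "\<forall>j<n. \<bar>d n j\<bar> \<le> D" and "m \<le> n" and "0 \<le> t"
    and S: "(\<Sum>k<n. \<Sum>i<r. (cmod (g i k \<omega>))\<^sup>2) \<le> t * n"
  shows "(\<lambda>j. if j < m then eig_desc (Xtilde orth n d r \<theta> g \<omega>) ! j else 0)
           \<in> PiE UNIV (\<lambda>j. if j < m then {-(D + (\<Sum>i<r. \<bar>\<theta> i\<bar>) * (1 + t))..D + (\<Sum>i<r. \<bar>\<theta> i\<bar>) * (1 + t)} else {0})"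
proof -
  define \<Theta> where "\<Theta> = (\<Sum>i<r. \<bar>\<theta> i\<bar>)"
  have "\<Theta> \<ge> 0"
    unfolding \<Theta>_def by (simp add: sum_nonneg)
  have bound: "\<bar>eig_desc (Xtilde orth n d r \<theta> g \<omega>) ! j\<bar> \<le> D + \<Theta> * (1 + t)" if "j < n" for j
  proof (cases orth)
    case True
    have "\<Theta> \<le> \<Theta> * (1 + t)"
      using \<open>\<Theta> \<ge> 0\<close> \<open>0 \<le> t\<close> by (simp add: algebra_simps)
    moreover have "\<bar>eig_desc (Xtilde orth n d r \<theta> g \<omega>) ! j\<bar> \<le> D + \<Theta>"
      using True abs_eig_desc_Xtilde_orth_le[of n d D j r \<theta> g \<omega>] D that unfolding \<Theta>_def by simp
    ultimately show ?thesis
      by linarith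
  next
    case False
    have "(\<Sum>k<n. \<Sum>i<r. (cmod (g i k \<omega>))\<^sup>2) \<le> (1 + t) * n"
      unfolding distrib_right using S of_nat_0_le_iff[of n] by linarith
    then have "(\<Sum>k<n. \<Sum>i<r. (cmod (g i k \<omega>))\<^sup>2) / n \<le> 1 + t"
      using that by (simp add: divide_le_eq)
    then have "\<Theta> * ((\<Sum>k<n. \<Sum>i<r. (cmod (g i k \<omega>))\<^sup>2) / n) \<le> \<Theta> * (1 + t)"
      using \<open>\<Theta> \<ge> 0\<close> by (rule mult_left_mono)
    moreover have "\<bar>eig_desc (Xtilde orth n d r \<theta> g \<omega>) ! j\<bar>
        \<le> D + \<Theta> * ((\<Sum>k<n. \<Sum>i<r. (cmod (g i k \<omega>))\<^sup>2) / n)"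
      using False abs_eig_desc_Xtilde_iid_le[of n d D j r \<theta> g \<omega>] D that unfolding \<Theta>_def by simp
    ultimately show ?thesis
      by linarith
  qed
  have "eig_desc (Xtilde orth n d r \<theta> g \<omega>) ! j \<in> {-(D + \<Theta> * (1 + t))..D + \<Theta> * (1 + t)}"
    if "j < m" for j
    using bound[of j] that \<open>m \<le> n\<close> by (simp add: abs_le_iff)
  then show ?thesis
    unfolding \<Theta>_def by (intro PiE_I) simp_all
qed

lemma measure_Xtilde_top_eigenvalues_notin_box_le:
  fixes g :: "nat \<Rightarrow> nat \<Rightarrow> 'w \<Rightarrow> complex"
  assumes "prob_space M" and g_meas: "\<And>i k. i < r \<Longrightarrow> g i k \<in> borel_measurable M"
    and D: "\<forall>j<n. \<bar>d n j\<bar> \<le> D" and "m \<le> n" and "0 \<le> t"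
  shows "measure M {\<omega> \<in> space M.
           (\<lambda>j. if j < m then eig_desc (Xtilde orth n d r \<theta> g \<omega>) ! j else 0) \<notin> PiE UNIV
             (\<lambda>j. if j < m then {-(D + (\<Sum>i<r. \<bar>\<theta> i\<bar>) * (1 + t))..D + (\<Sum>i<r. \<bar>\<theta> i\<bar>) * (1 + t)} else {0})}
         \<le> measure M {\<omega> \<in> space M. t * n < (\<Sum>k<n. \<Sum>i<r. (cmod (g i k \<omega>))\<^sup>2)}"
proof -
  interpret prob_space M
    by fact
  have [measurable]: "(\<lambda>\<omega>. \<Sum>k<n. \<Sum>i<r. (cmod (g i k \<omega>))\<^sup>2) \<in> borel_measurable M"
    by (intro borel_measurable_sum) (use g_meas in measurable)
  show ?thesis
    using Xtilde_top_eigenvalues_in_box[of n d D m t g _ r orth \<theta>, OF D \<open>m \<le> n\<close> \<open>0 \<le> t\<close>,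
        unfolded not_less[symmetric]]
    by (intro finite_measure_mono) (blast, measurable)
qed

lemma (in prob_space) nn_integral_prod_indep_identical:
  assumes indep: "indep_vars (\<lambda>_. N) X UNIV"
    and ident: "\<And>k. distr M N (X k) = distr M N (X 0)"
    and h: "h \<in> borel_measurable N"
  shows "(\<integral>\<^sup>+\<omega>. (\<Prod>k<n. h (X k \<omega>)) \<partial>M) = (\<integral>\<^sup>+\<omega>. h (X 0 \<omega>) \<partial>M) ^ n"
proof -
  have X: "X k \<in> measurable M N" for k
    using indep by (auto simp: indep_vars_def)
  have "(\<integral>\<^sup>+\<omega>. (\<Prod>k<n. h (X k \<omega>)) \<partial>M) = (\<Prod>k<n. \<integral>\<^sup>+\<omega>. h (X k \<omega>) \<partial>M)"
    by (intro indep_vars_nn_integral indep_vars_compose2[OF indep_vars_subset[OF indep]])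
      (auto intro: h)
  also have "\<dots> = (\<Prod>k<n. \<integral>\<^sup>+\<omega>. h (X 0 \<omega>) \<partial>M)"
  proof (rule prod.cong[OF refl])
    fix k
    have "(\<integral>\<^sup>+\<omega>. h (X k \<omega>) \<partial>M) = (\<integral>\<^sup>+x. h x \<partial>distr M N (X k))"
      using X h by (simp add: nn_integral_distr)
    also have "\<dots> = (\<integral>\<^sup>+x. h x \<partial>distr M N (X 0))"
      by (simp only: ident[of k])
    also have "\<dots> = (\<integral>\<^sup>+\<omega>. h (X 0 \<omega>) \<partial>M)"
      using X h by (simp add: nn_integral_distr)
    finally show "(\<integral>\<^sup>+\<omega>. h (X k \<omega>) \<partial>M) = (\<integral>\<^sup>+\<omega>. h (X 0 \<omega>) \<partial>M)" .
  qed
  finally show ?thesis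
    by simp
qed

lemma (in prob_space) emeasure_sum_indep_identical_gt_le:
  fixes f :: "'b \<Rightarrow> real"
  assumes indep: "indep_vars (\<lambda>_. N) X UNIV"
    and ident: "\<And>k. distr M N (X k) = distr M N (X 0)"
    and f[measurable]: "f \<in> borel_measurable N" and "0 \<le> \<alpha>"
  shows "emeasure M {\<omega> \<in> space M. s < (\<Sum>k<n. f (X k \<omega>))}
           \<le> ennreal (exp (- \<alpha> * s)) * (\<integral>\<^sup>+\<omega>. ennreal (exp (\<alpha> * f (X 0 \<omega>))) \<partial>M) ^ n"
proof -
  have [measurable]: "X k \<in> measurable M N" for k
    using indep by (auto simp: indep_vars_def)
  define S where "S \<omega> = (\<Sum>k<n. f (X k \<omega>))" for \<omega>
  have [measurable]: "S \<in> borel_measurable M"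
    unfolding S_def by measurable
  have "{\<omega> \<in> space M. s < S \<omega>}
      \<subseteq> {\<omega> \<in> space M. 1 \<le> ennreal (exp (- \<alpha> * s)) * ennreal (exp (\<alpha> * S \<omega>))}"
  proof safe
    fix \<omega> assume "s < S \<omega>"
    then have "1 \<le> exp (- \<alpha> * s + \<alpha> * S \<omega>)"
      using \<open>0 \<le> \<alpha>\<close> by (simp add: mult_left_mono)
    then show "1 \<le> ennreal (exp (- \<alpha> * s)) * ennreal (exp (\<alpha> * S \<omega>))"
      unfolding exp_add by (simp add: ennreal_mult'[symmetric])
  qed
  then have "emeasure M {\<omega> \<in> space M. s < S \<omega>}
      \<le> emeasure M {\<omega> \<in> space M. 1 \<le> ennreal (exp (- \<alpha> * s)) * ennreal (exp (\<alpha> * S \<omega>))}"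
    by (rule emeasure_mono) measurable
  also have "\<dots> \<le> ennreal (exp (- \<alpha> * s))
      * (\<integral>\<^sup>+\<omega>. ennreal (exp (\<alpha> * S \<omega>)) * indicator (space M) \<omega> \<partial>M)"
    by (rule nn_integral_Markov_inequality) measurable
  also have "(\<integral>\<^sup>+\<omega>. ennreal (exp (\<alpha> * S \<omega>)) * indicator (space M) \<omega> \<partial>M)
      = (\<integral>\<^sup>+\<omega>. (\<Prod>k<n. ennreal (exp (\<alpha> * f (X k \<omega>)))) \<partial>M)"
    by (intro nn_integral_cong) (simp add: S_def sum_distrib_left exp_sum prod_ennreal)
  also have "\<dots> = (\<integral>\<^sup>+\<omega>. ennreal (exp (\<alpha> * f (X 0 \<omega>))) \<partial>M) ^ n"
    by (rule nn_integral_prod_indep_identical[OF indep ident]) measurable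
  finally show ?thesis
    by (simp add: S_def)
qed

lemma (in prob_space) one_le_nn_integral_exp:
  assumes "\<And>\<omega>. \<omega> \<in> space M \<Longrightarrow> 0 \<le> f \<omega>"
  shows "1 \<le> (\<integral>\<^sup>+\<omega>. ennreal (exp (f \<omega>)) \<partial>M)"
proof -
  have "(1::ennreal) = (\<integral>\<^sup>+\<omega>. 1 \<partial>M)"
    by (simp add: emeasure_space_1)
  also have "\<dots> \<le> (\<integral>\<^sup>+\<omega>. ennreal (exp (f \<omega>)) \<partial>M)"
    using assms by (intro nn_integral_mono) simp
  finally show ?thesis .
qed

lemma (in prob_space) sum_sq_norm_iid_tail_le:
  fixes g :: "nat \<Rightarrow> nat \<Rightarrow> 'a \<Rightarrow> complex"
  assumes indep: "indep_vars (\<lambda>_. PiM {..<r} (\<lambda>_. borel)) (\<lambda>k \<omega>. \<lambda>i\<in>{..<r}. g i k \<omega>) UNIV"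
    and ident: "\<And>k. distr M (PiM {..<r} (\<lambda>_. borel)) (\<lambda>\<omega>. \<lambda>i\<in>{..<r}. g i k \<omega>)
                   = distr M (PiM {..<r} (\<lambda>_. borel)) (\<lambda>\<omega>. \<lambda>i\<in>{..<r}. g i 0 \<omega>)"
    and "0 \<le> \<alpha>" and "0 \<le> E"
    and E: "(\<integral>\<^sup>+\<omega>. ennreal (exp (\<alpha> * (\<Sum>i<r. (cmod (g i 0 \<omega>))\<^sup>2))) \<partial>M) = ennreal E"
  shows "measure M {\<omega> \<in> space M. s < (\<Sum>k<n. \<Sum>i<r. (cmod (g i k \<omega>))\<^sup>2)} \<le> exp (- \<alpha> * s) * E ^ n"
proof -
  let ?f = "\<lambda>x :: nat \<Rightarrow> complex. \<Sum>i<r. (cmod (x i))\<^sup>2"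
  have "emeasure M {\<omega> \<in> space M. s < (\<Sum>k<n. \<Sum>i<r. (cmod (g i k \<omega>))\<^sup>2)}
      \<le> ennreal (exp (- \<alpha> * s)) * ennreal E ^ n"
    using emeasure_sum_indep_identical_gt_le[OF indep ident, of ?f \<alpha> s n] \<open>0 \<le> \<alpha>\<close>
    by (simp add: E)
  also have "\<dots> = ennreal (exp (- \<alpha> * s) * E ^ n)"
    using \<open>0 \<le> E\<close> by (simp add: ennreal_power ennreal_mult)
  finally show ?thesis
    using \<open>0 \<le> E\<close> by (simp add: emeasure_eq_measure)
qed

lemma (in prob_space) sum_sq_norm_iid_exponential_tail:
  fixes g :: "nat \<Rightarrow> nat \<Rightarrow> 'a \<Rightarrow> complex" and L :: real
  assumes indep: "indep_vars (\<lambda>_. PiM {..<r} (\<lambda>_. borel)) (\<lambda>k \<omega>. \<lambda>i\<in>{..<r}. g i k \<omega>) UNIV"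
    and ident: "\<And>k. distr M (PiM {..<r} (\<lambda>_. borel)) (\<lambda>\<omega>. \<lambda>i\<in>{..<r}. g i k \<omega>)
                   = distr M (PiM {..<r} (\<lambda>_. borel)) (\<lambda>\<omega>. \<lambda>i\<in>{..<r}. g i 0 \<omega>)"
    and moment: "\<exists>\<alpha>>0. (\<integral>\<^sup>+\<omega>. ennreal (exp (\<alpha> * (\<Sum>i<r. (cmod (g i 0 \<omega>))\<^sup>2))) \<partial>M) < \<infinity>"
  obtains t where "0 \<le> t"
    and "\<And>n. measure M {\<omega> \<in> space M. t * n < (\<Sum>k<n. \<Sum>i<r. (cmod (g i k \<omega>))\<^sup>2)}
               \<le> exp (- L * n)"
proof -
  obtain \<alpha> where "\<alpha> > 0"
    and fin: "(\<integral>\<^sup>+\<omega>. ennreal (exp (\<alpha> * (\<Sum>i<r. (cmod (g i 0 \<omega>))\<^sup>2))) \<partial>M) < \<infinity>"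
    using moment by blast
  define E where "E = enn2real (\<integral>\<^sup>+\<omega>. ennreal (exp (\<alpha> * (\<Sum>i<r. (cmod (g i 0 \<omega>))\<^sup>2))) \<partial>M)"
  have E: "(\<integral>\<^sup>+\<omega>. ennreal (exp (\<alpha> * (\<Sum>i<r. (cmod (g i 0 \<omega>))\<^sup>2))) \<partial>M) = ennreal E"
    using fin by (simp add: E_def)
  have "1 \<le> E"
    using one_le_nn_integral_exp[of "\<lambda>\<omega>. \<alpha> * (\<Sum>i<r. (cmod (g i 0 \<omega>))\<^sup>2)"] \<open>\<alpha> > 0\<close>
    by (simp add: E sum_nonneg ennreal_le_iff2)
  define t where "t = max 0 ((L + ln E) / \<alpha>)"
  have "0 \<le> t"
    unfolding t_def by simp
  have "L + ln E = \<alpha> * ((L + ln E) / \<alpha>)"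
    using \<open>\<alpha> > 0\<close> by simp
  also have "\<dots> \<le> \<alpha> * t"
    using \<open>\<alpha> > 0\<close> unfolding t_def by (intro mult_left_mono) auto
  finally have "L + ln E \<le> \<alpha> * t" .
  have "measure M {\<omega> \<in> space M. t * n < (\<Sum>k<n. \<Sum>i<r. (cmod (g i k \<omega>))\<^sup>2)} \<le> exp (- L * n)" for n
  proof -
    have "measure M {\<omega> \<in> space M. t * n < (\<Sum>k<n. \<Sum>i<r. (cmod (g i k \<omega>))\<^sup>2)}
        \<le> exp (- \<alpha> * (t * n)) * E ^ n"
      using \<open>\<alpha> > 0\<close> \<open>1 \<le> E\<close> by (intro sum_sq_norm_iid_tail_le[OF indep ident _ _ E]) simp_all
    also have "\<dots> = exp (- \<alpha> * (t * n)) * exp (n * ln E)"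
      using \<open>1 \<le> E\<close> by (simp add: exp_of_nat_mult)
    also have "\<dots> \<le> exp (- L * n)"
      using mult_right_mono[OF \<open>L + ln E \<le> \<alpha> * t\<close>, of "real n"]
      by (simp add: algebra_simps flip: exp_add)
    finally show ?thesis .
  qed
  with \<open>0 \<le> t\<close> that show ?thesis
    by blast
qed

lemma limsup_scaled_ln_ereal_le:
  assumes "\<forall>\<^sub>F n in sequentially. p n \<le> exp (- L * real n)"
  shows "limsup (\<lambda>n. ereal (1 / real n) * ln_ereal (p n)) \<le> - ereal L"
proof (rule Limsup_bounded)
  show "\<forall>\<^sub>F n in sequentially. ereal (1 / real n) * ln_ereal (p n) \<le> - ereal L"
    using assms eventually_gt_at_top[of 0]
  proof eventually_elim
    case (elim n)
    show ?case
    proof (cases "p n \<le> 0")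
      case True
      then show ?thesis
        using elim by (simp add: ln_ereal_def)
    next
      case False
      then have "ln (p n) \<le> ln (exp (- L * n))"
        using elim by (subst ln_le_cancel_iff) auto
      then show ?thesis
        using False elim by (simp add: ln_ereal_def field_simps)
    qed
  qed
qed

lemma eventually_abs_le_if_Max_Min_tendsto:
  fixes d :: "nat \<Rightarrow> nat \<Rightarrow> real"
  assumes "(\<lambda>n. Max (d n ` {..<n})) \<longlonglongrightarrow> b" and "(\<lambda>n. Min (d n ` {..<n})) \<longlonglongrightarrow> a"
  shows "\<forall>\<^sub>F n in sequentially. \<forall>j<n. \<bar>d n j\<bar> \<le> \<bar>a\<bar> + \<bar>b\<bar> + 1"
proof -
  have "\<forall>\<^sub>F n in sequentially. Max (d n ` {..<n}) < b + 1"
    using assms(1) by (rule order_tendstoD) simp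
  moreover have "\<forall>\<^sub>F n in sequentially. a - 1 < Min (d n ` {..<n})"
    using assms(2) by (rule order_tendstoD) simp
  ultimately have "\<forall>\<^sub>F n in sequentially. Max (d n ` {..<n}) < b + 1 \<and> a - 1 < Min (d n ` {..<n})"
    by (rule eventually_conj)
  then show ?thesis
  proof (rule eventually_mono, intro allI impI)
    fix n j
    assume "Max (d n ` {..<n}) < b + 1 \<and> a - 1 < Min (d n ` {..<n})" and "j < n"
    moreover have "d n j \<le> Max (d n ` {..<n})" and "Min (d n ` {..<n}) \<le> d n j"
      using \<open>j < n\<close> by auto
    ultimately show "\<bar>d n j\<bar> \<le> \<bar>a\<bar> + \<bar>b\<bar> + 1"
      unfolding abs_le_iff using abs_ge_self[of b] abs_ge_minus_self[of a] by linarith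
  qed
qed

lemma compact_PiE_UNIV:
  fixes K :: "'i \<Rightarrow> 'a::topological_space set"
  assumes "\<And>i. compact (K i)"
  shows "compact (PiE UNIV K)"
proof -
  have "compactin (product_topology (\<lambda>_. euclidean) UNIV) (PiE UNIV K)"
    using assms by (simp add: compactin_PiE compactin_euclidean_iff)
  then show ?thesis
    by (simp add: euclidean_product_topology compactin_euclidean_iff)
qed

theorem lemma6p3:
  fixes M :: "'w measure" and g :: "nat \<Rightarrow> nat \<Rightarrow> 'w \<Rightarrow> complex"
    and real_case orth :: bool and m r :: nat and \<theta> :: "nat \<Rightarrow> real"
    and d :: "nat \<Rightarrow> nat \<Rightarrow> real" and \<mu> :: "real measure" and a b :: real
  assumes P: "prob_space M"
    and mr: "1 \<le> m" "m \<le> r"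
    and \<theta>_mono: "\<And>i j. i \<le> j \<Longrightarrow> j < r \<Longrightarrow> \<theta> j \<le> \<theta> i"
    and \<theta>_pos: "\<And>i. i < m \<Longrightarrow> \<theta> i > 0"
    and \<theta>_neg: "\<And>i. m \<le> i \<Longrightarrow> i < r \<Longrightarrow> \<theta> i < 0"
    and g_meas: "\<And>i k. i < r \<Longrightarrow> g i k \<in> borel_measurable M"
    and g_K: "\<And>i k \<omega>. i < r \<Longrightarrow> \<omega> \<in> space M \<Longrightarrow> g i k \<omega> \<in> Kset real_case"
    and g_indep: "prob_space.indep_vars M (\<lambda>_. PiM {..<r} (\<lambda>_. borel))
                    (\<lambda>k \<omega>. \<lambda>i\<in>{..<r}. g i k \<omega>) UNIV"
    and g_ident: "\<And>k. distr M (PiM {..<r} (\<lambda>_. borel)) (\<lambda>\<omega>. \<lambda>i\<in>{..<r}. g i k \<omega>)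
                     = distr M (PiM {..<r} (\<lambda>_. borel)) (\<lambda>\<omega>. \<lambda>i\<in>{..<r}. g i 0 \<omega>)"
    and A_mu: "real_distribution \<mu>" "compact (measure_support \<mu>)"
    and A_ab: "a = Inf (measure_support \<mu>)" "b = Sup (measure_support \<mu>)" "a \<le> b"
    and A_conv: "weak_conv_m (\<lambda>n. empirical_measure n (d n)) \<mu>"
    and B_exp: "\<exists>\<alpha>>0. (\<integral>\<^sup>+ \<omega>. ennreal (exp (\<alpha> * (\<Sum>i<r. (cmod (g i 0 \<omega>))\<^sup>2))) \<partial>M) < \<infinity>"
    and B_orth: "orth \<Longrightarrow> (\<forall>c :: nat \<Rightarrow> complex. (\<forall>i<r. c i \<in> Kset real_case) \<and> (\<exists>i<r. c i \<noteq> 0) \<longrightarrow>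
                   measure M {\<omega> \<in> space M. (\<Sum>i<r. c i * g i 0 \<omega>) = 0} = 0)"
    and C_top: "(\<lambda>n. Max (d n ` {..<n})) \<longlonglongrightarrow> b"
    and C_bot: "(\<lambda>n. Min (d n ` {..<n})) \<longlonglongrightarrow> a"
  shows "\<forall>L>0. \<exists>C :: (nat \<Rightarrow> real) set. compact C \<and>
           limsup (\<lambda>n. ereal (1 / real n) *
             ln_ereal (measure M {\<omega> \<in> space M.
               (\<lambda>j. if j < m then eig_desc (Xtilde orth n d r \<theta> g \<omega>) ! j else 0) \<notin> C}))
           \<le> - ereal L"
proof (intro allI impI)
  fix L :: real
  let ?top = "\<lambda>n \<omega>. (\<lambda>j. if j < m then eig_desc (Xtilde orth n d r \<theta> g \<omega>) ! j else 0)"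
  obtain t where "0 \<le> t"
    and tail: "\<And>n. measure M {\<omega> \<in> space M. t * n < (\<Sum>k<n. \<Sum>i<r. (cmod (g i k \<omega>))\<^sup>2)} \<le> exp (- L * n)"
    using prob_space.sum_sq_norm_iid_exponential_tail[where L = L, OF P g_indep g_ident B_exp] by blast
  define K where "K = \<bar>a\<bar> + \<bar>b\<bar> + 1 + (\<Sum>i<r. \<bar>\<theta> i\<bar>) * (1 + t)"
  define C where "C = PiE UNIV (\<lambda>j::nat. if j < m then {-K..K} else {0})"
  have "compact C"
    unfolding C_def by (rule compact_PiE_UNIV) simp
  have "\<forall>\<^sub>F n in sequentially. measure M {\<omega> \<in> space M. ?top n \<omega> \<notin> C} \<le> exp (- L * n)"
    using eventually_abs_le_if_Max_Min_tendsto[OF C_top C_bot] eventually_ge_at_top[of m]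
  proof eventually_elim
    case (elim n)
    show ?case
      unfolding C_def K_def
      using measure_Xtilde_top_eigenvalues_notin_box_le[where n = n and d = d, OF P g_meas elim \<open>0 \<le> t\<close>]
        tail[of n]
      by (rule order_trans)
  qed
  then have "limsup (\<lambda>n. ereal (1 / real n) * ln_ereal (measure M {\<omega> \<in> space M. ?top n \<omega> \<notin> C}))
      \<le> - ereal L"
    by (rule limsup_scaled_ln_ereal_le)
  with \<open>compact C\<close> show "\<exists>C :: (nat \<Rightarrow> real) set. compact C \<and>
      limsup (\<lambda>n. ereal (1 / real n) * ln_ereal (measure M {\<omega> \<in> space M. ?top n \<omega> \<notin> C}))
        \<le> - ereal L"
    by blast
qed

end
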